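(* Let $K_1,K_2$ be proper (nonzero, not all of $L^2(\mathbb{R})$) closed subspaces which both belong to one of the following three families: (i) $\{L^2([t,\infty)):t\in\mathbb{R}\}$; (ii) $\{e^{i\lambda x}H^2(\mathbb{R}):\lambda\in\mathbb{R}\}$; (iii) $\{K_{\lambda,s}:\lambda\in\mathbb{R},s>0\}$. Then the restriction algebras $\mathcal{A}_p|_{K_1}$ and $\mathcal{A}_p|_{K_2}$ are unitarily equivalent.
   Context: On $L^2(\mathbb{R})$ let $(M_\lambda f)(x)=e^{i\lambda x}f(x)$, $(D_\mu f)(x)=f(x-\mu)$. The parabolic algebra $\mathcal{A}_p$ is the weak operator topology closed algebra generated by $\{M_\lambda:\lambda\geq0\}\cup\{D_\mu:\mu\geq0\}$. $H^2(\mathbb{R})$ is the Hardy space of the upper half-plane, $\phi_s(x)=e^{-isx^2/2}$, and $K_{\lambda,s}=M_\lambda M_{\phi_s}H^2(\mathbb{R})$. All these subspaces are invariant for $\mathcal{A}_p$. For an invariant subspace $K$, the restriction algebra is $\mathcal{A}_p|_K=\{A|_K:A\in\mathcal{A}_p\}\subseteq B(K)$. Unitary equivalence means there is a unitary $W:K_1\to K_2$ with $W(\mathcal{A}_p|_{K_1})W^*=\mathcal{A}_p|_{K_2}$. *)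

theory Defs
  imports "HOL-Analysis.Analysis"
begin

text \<open>Elements of L2(R) are represented by measurable functions real => complex
  with square integrable modulus; equality in L2 is almost-everywhere equality.\<close>

type_synonym fn = "real \<Rightarrow> complex"
type_synonym oper = "fn \<Rightarrow> fn"

definition L2 :: "fn set" where
  "L2 = {f. f \<in> borel_measurable lborel \<and> integrable lborel (\<lambda>x. (cmod (f x))\<^sup>2)}"

definition ae_eq :: "fn \<Rightarrow> fn \<Rightarrow> bool" (infix "=\<^sub>a\<^sub>e" 50) where
  "f =\<^sub>a\<^sub>e g \<longleftrightarrow> (AE x in lborel. f x = g x)"

definition l2inner :: "fn \<Rightarrow> fn \<Rightarrow> complex" where
  "l2inner f g = integral\<^sup>L lborel (\<lambda>x. f x * cnj (g x))"

definition l2norm2 :: "fn \<Rightarrow> real" where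
  "l2norm2 f = integral\<^sup>L lborel (\<lambda>x. (cmod (f x))\<^sup>2)"

definition Mop :: "real \<Rightarrow> oper" where
  "Mop l f = (\<lambda>x. exp (\<i> * complex_of_real (l * x)) * f x)"

definition Dop :: "real \<Rightarrow> oper" where
  "Dop m f = (\<lambda>x. f (x - m))"

inductive_set alg_gen :: "oper set" where
  gen_M: "l \<ge> 0 \<Longrightarrow> Mop l \<in> alg_gen"
| gen_D: "m \<ge> 0 \<Longrightarrow> Dop m \<in> alg_gen"
| gen_add: "A \<in> alg_gen \<Longrightarrow> B \<in> alg_gen \<Longrightarrow> (\<lambda>f x. A f x + B f x) \<in> alg_gen"
| gen_smult: "A \<in> alg_gen \<Longrightarrow> (\<lambda>f x. c * A f x) \<in> alg_gen"
| gen_comp: "A \<in> alg_gen \<Longrightarrow> B \<in> alg_gen \<Longrightarrow> (\<lambda>f. A (B f)) \<in> alg_gen"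

definition bounded_op :: "oper \<Rightarrow> bool" where
  "bounded_op T \<longleftrightarrow>
     (\<forall>f\<in>L2. T f \<in> L2) \<and>
     (\<forall>f\<in>L2. \<forall>g\<in>L2. T (\<lambda>x. f x + g x) =\<^sub>a\<^sub>e (\<lambda>x. T f x + T g x)) \<and>
     (\<forall>f\<in>L2. \<forall>c. T (\<lambda>x. c * f x) =\<^sub>a\<^sub>e (\<lambda>x. c * T f x)) \<and>
     (\<exists>C. \<forall>f\<in>L2. l2norm2 (T f) \<le> C * l2norm2 f)"

text \<open>The parabolic algebra: the WOT-closure (in B(L2)) of the generated algebra.\<close>
definition Ap :: "oper set" where
  "Ap = {T. bounded_op T \<and>
     (\<forall>ps :: (fn \<times> fn) list. (\<forall>(f, g)\<in>set ps. f \<in> L2 \<and> g \<in> L2) \<longrightarrow>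
        (\<forall>\<epsilon>>0. \<exists>A\<in>alg_gen. \<forall>(f, g)\<in>set ps.
            cmod (l2inner (T f) g - l2inner (A f) g) < \<epsilon>))}"

definition H2 :: "fn set" where
  "H2 = {f \<in> L2. \<exists>F :: complex \<Rightarrow> complex.
      F holomorphic_on {z. Im z > 0} \<and>
      (\<forall>y>0. integrable lborel (\<lambda>x. (cmod (F (Complex x y)))\<^sup>2)) \<and>
      (\<exists>C. \<forall>y>0. integral\<^sup>L lborel (\<lambda>x. (cmod (F (Complex x y)))\<^sup>2) \<le> C) \<and>
      ((\<lambda>y. integral\<^sup>L lborel (\<lambda>x. (cmod (F (Complex x y) - f x))\<^sup>2)) \<longlongrightarrow> 0) (at_right 0)}"

definition Lhalf :: "real \<Rightarrow> fn set" where
  "Lhalf t = {f \<in> L2. AE x in lborel. x < t \<longrightarrow> f x = 0}"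

definition phi :: "real \<Rightarrow> real \<Rightarrow> complex" where
  "phi s x = exp (- \<i> * complex_of_real (s * x\<^sup>2 / 2))"

definition MH2 :: "real \<Rightarrow> fn set" where
  "MH2 l = {f \<in> L2. \<exists>h\<in>H2. f =\<^sub>a\<^sub>e Mop l h}"

definition Kls :: "real \<Rightarrow> real \<Rightarrow> fn set" where
  "Kls l s = {f \<in> L2. \<exists>h\<in>H2. f =\<^sub>a\<^sub>e Mop l (\<lambda>x. phi s x * h x)}"

definition proper_subspace :: "fn set \<Rightarrow> bool" where
  "proper_subspace K \<longleftrightarrow> (\<exists>f\<in>K. \<not> f =\<^sub>a\<^sub>e (\<lambda>x. 0)) \<and> (\<exists>f\<in>L2. f \<notin> K)"

text \<open>Unitary equivalence of the restriction algebras Ap|K1 and Ap|K2: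
  a unitary W : K1 \<rightarrow> K2 with W (Ap|K1) W* = Ap|K2, i.e. for every A in Ap there is
  B in Ap with W A = B W on K1, and conversely.\<close>
definition restr_unit_equiv :: "fn set \<Rightarrow> fn set \<Rightarrow> bool" where
  "restr_unit_equiv K1 K2 \<longleftrightarrow> (\<exists>W :: oper.
     (\<forall>f\<in>K1. W f \<in> K2) \<and>
     (\<forall>f\<in>K1. \<forall>g\<in>K1. W (\<lambda>x. f x + g x) =\<^sub>a\<^sub>e (\<lambda>x. W f x + W g x)) \<and>
     (\<forall>f\<in>K1. \<forall>c. W (\<lambda>x. c * f x) =\<^sub>a\<^sub>e (\<lambda>x. c * W f x)) \<and>
     (\<forall>f\<in>K1. \<forall>g\<in>K1. l2inner (W f) (W g) = l2inner f g) \<and>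
     (\<forall>g\<in>K2. \<exists>f\<in>K1. W f =\<^sub>a\<^sub>e g) \<and>
     (\<forall>A\<in>Ap. \<exists>B\<in>Ap. \<forall>f\<in>K1. W (A f) =\<^sub>a\<^sub>e B (W f)) \<and>
     (\<forall>B\<in>Ap. \<exists>A\<in>Ap. \<forall>f\<in>K1. W (A f) =\<^sub>a\<^sub>e B (W f)))"

end

theory Submission
  imports Defs
begin

text \<open>Each family is a single orbit of unitaries of L2 that normalize the algebra generated by
  the modulations \<open>M\<^sub>\<lambda>\<close> and translations \<open>D\<^sub>\<mu>\<close> with \<open>\<lambda>, \<mu> \<ge> 0\<close>. Translations move the half-line
  spaces, modulations move the spaces \<open>e\<^sup>i\<^sup>\<lambda>\<^sup>x H\<^sup>2\<close> and the \<open>K\<^sub>\<lambda>\<^sub>,\<^sub>s\<close> in \<open>\<lambda>\<close>, and the dilation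
  \<open>dil a f = \<surd>a f(a \<cdot>)\<close> with \<open>a > 0\<close> preserves \<open>H\<^sup>2\<close> while turning \<open>phi s\<close> into \<open>phi (s * a\<^sup>2)\<close>, so it moves
  \<open>K\<^sub>\<lambda>\<^sub>,\<^sub>s\<close> in \<open>s\<close>. By the Weyl commutation relations, conjugating a generator by any of these
  unitaries gives a scalar multiple of a generator with parameter of the same sign, so
  conjugation maps the generated algebra, hence also its WOT closure \<open>\<A>\<^sub>p\<close>, onto itself; the
  unitary restricted to \<open>K\<^sub>1\<close> implements the equivalence.\<close>

lemma AE_lborel_affine:
  fixes P :: "real \<Rightarrow> bool"
  assumes "c \<noteq> 0" and "AE x in lborel. P x"
  shows "AE x in lborel. P (t + c * x)"
proof -
  from assms(2) obtain N where N: "{x \<in> space lborel. \<not> P x} \<subseteq> N" "emeasure lborel N = 0"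
    "N \<in> sets lborel"
    by (auto elim!: AE_E)
  have "AE x in lborel. x \<notin> N"
    using N by (intro AE_not_in) auto
  moreover have "Measurable.pred borel (\<lambda>x. x \<notin> N)"
    using N(3) unfolding pred_def by (auto simp: Compl_eq_Diff_UNIV[symmetric])
  ultimately have "AE x in lborel. t + c * x \<notin> N"
    using AE_borel_affine[OF assms(1)] by blast
  then show ?thesis
    by (rule eventually_mono) (use N(1) in auto)
qed

lemma ae_eq_refl: "f =\<^sub>a\<^sub>e f"
  unfolding ae_eq_def by simp

lemma l2norm2_conv_l2inner: "l2norm2 f = Re (l2inner f f)"
  unfolding l2norm2_def l2inner_def
  by (simp only: complex_norm_square[symmetric] integral_complex_of_real Re_complex_of_real)

lemma lborel_integral_shift:
  fixes k :: "real \<Rightarrow> 'a::{banach, second_countable_topology}"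
  shows "integral\<^sup>L lborel (\<lambda>x. k (x - t)) = integral\<^sup>L lborel k"
  using lborel_integral_real_affine[of 1 k "-t"] by simp

lemma lborel_integrable_shift_iff:
  fixes k :: "real \<Rightarrow> 'a::{banach, second_countable_topology}"
  shows "integrable lborel (\<lambda>x. k (x - t)) \<longleftrightarrow> integrable lborel k"
  using lborel_integrable_real_affine_iff[of 1 k "-t"] by simp

lemma lborel_integral_dilation:
  fixes k :: "real \<Rightarrow> 'a::{banach, second_countable_topology}"
  assumes "a > 0"
  shows "integral\<^sup>L lborel (\<lambda>x. a *\<^sub>R k (a * x)) = integral\<^sup>L lborel k"
  using lborel_integral_real_affine[of a k 0] assms by simp

lemma lborel_integrable_dilation_iff:
  fixes k :: "real \<Rightarrow> 'a::{banach, second_countable_topology}"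
  assumes "a > 0"
  shows "integrable lborel (\<lambda>x. k (a * x)) \<longleftrightarrow> integrable lborel k"
  using lborel_integrable_real_affine_iff[of a k 0] assms by simp

definition dil :: "real \<Rightarrow> oper" where
  "dil a f = (\<lambda>x. complex_of_real (sqrt a) * f (a * x))"

lemma norm_dil_sq: "a \<ge> 0 \<Longrightarrow> (cmod (dil a f x))\<^sup>2 = a * (cmod (f (a * x)))\<^sup>2"
  unfolding dil_def by (simp add: norm_mult power_mult_distrib)

lemma integrable_norm_dil_sq_iff:
  assumes "a > 0"
  shows "integrable lborel (\<lambda>x. (cmod (dil a f x))\<^sup>2) \<longleftrightarrow> integrable lborel (\<lambda>x. (cmod (f x))\<^sup>2)"
  using lborel_integrable_dilation_iff[OF assms, of "\<lambda>x. (cmod (f x))\<^sup>2"] assms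
  by (simp add: norm_dil_sq)

lemma integral_norm_dil_sq:
  assumes "a > 0"
  shows "integral\<^sup>L lborel (\<lambda>x. (cmod (dil a f x))\<^sup>2) = integral\<^sup>L lborel (\<lambda>x. (cmod (f x))\<^sup>2)"
  using lborel_integral_dilation[OF assms, of "\<lambda>x. (cmod (f x))\<^sup>2"] assms
  by (simp add: norm_dil_sq)

lemma Mop_L2: "f \<in> L2 \<Longrightarrow> Mop l f \<in> L2"
  unfolding L2_def Mop_def by (auto simp: norm_mult)

lemma Dop_L2: "f \<in> L2 \<Longrightarrow> Dop t f \<in> L2"
  unfolding L2_def Dop_def
  using lborel_integrable_shift_iff[of "\<lambda>x. (cmod (f x))\<^sup>2" t]
  by (auto intro: measurable_compose[where f="\<lambda>x. x - t"])

lemma dil_L2: "a > 0 \<Longrightarrow> f \<in> L2 \<Longrightarrow> dil a f \<in> L2"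
  unfolding L2_def using integrable_norm_dil_sq_iff[of a f]
  by (auto simp: dil_def intro: measurable_compose[where f="\<lambda>x. a * x"])

lemma Mop_Mop: "Mop k (Mop l f) = Mop (k + l) f"
  unfolding Mop_def by (auto simp: exp_add[symmetric] algebra_simps)

lemma dil_dil: "dil a (dil b f) = dil (a * b) f"
  unfolding dil_def by (auto simp: real_sqrt_mult mult.assoc mult.left_commute)

lemma dil_Mop: "dil a (Mop l f) = Mop (l * a) (dil a f)"
  unfolding dil_def Mop_def by (auto simp: algebra_simps)

lemma dil_mult_phi: "dil a (\<lambda>x. phi s x * h x) = (\<lambda>x. phi (s * a\<^sup>2) x * dil a h x)"
  unfolding dil_def phi_def by (auto simp: algebra_simps)

definition normalizing_unitary :: "oper \<Rightarrow> oper \<Rightarrow> bool" where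
  "normalizing_unitary W W' \<longleftrightarrow> (\<forall>f. W (W' f) = f) \<and> (\<forall>f\<in>L2. W f \<in> L2) \<and>
     (\<forall>f g. l2inner (W f) (W g) = l2inner f g) \<and>
     (\<forall>f g. W (\<lambda>x. f x + g x) = (\<lambda>x. W f x + W g x)) \<and>
     (\<forall>f c. W (\<lambda>x. c * f x) = (\<lambda>x. c * W f x)) \<and>
     (\<forall>f g. f =\<^sub>a\<^sub>e g \<longrightarrow> W f =\<^sub>a\<^sub>e W g) \<and>
     (\<forall>A\<in>alg_gen. (\<lambda>f. W (A (W' f))) \<in> alg_gen)"

lemma normalizing_unitaryD:
  assumes "normalizing_unitary W W'"
  shows normalizing_unitary_right_inverse: "W (W' f) = f"
    and normalizing_unitary_L2: "f \<in> L2 \<Longrightarrow> W f \<in> L2"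
    and normalizing_unitary_l2inner: "l2inner (W f) (W g) = l2inner f g"
    and normalizing_unitary_add: "W (\<lambda>x. f x + g x) = (\<lambda>x. W f x + W g x)"
    and normalizing_unitary_mult: "W (\<lambda>x. c * f x) = (\<lambda>x. c * W f x)"
    and normalizing_unitary_ae_eq: "f =\<^sub>a\<^sub>e g \<Longrightarrow> W f =\<^sub>a\<^sub>e W g"
    and normalizing_unitary_alg_gen: "A \<in> alg_gen \<Longrightarrow> (\<lambda>f. W (A (W' f))) \<in> alg_gen"
  using assms unfolding normalizing_unitary_def by blast+

lemma normalizing_unitary_l2norm2:
  "normalizing_unitary W W' \<Longrightarrow> l2norm2 (W f) = l2norm2 f"
  by (simp add: l2norm2_conv_l2inner normalizing_unitary_l2inner)

lemma normalizing_unitary_comp: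
  assumes "normalizing_unitary V V'" and "normalizing_unitary W W'"
  shows "normalizing_unitary (\<lambda>f. V (W f)) (\<lambda>f. W' (V' f))"
  unfolding normalizing_unitary_def
proof (intro conjI allI ballI impI)
  fix A assume "A \<in> alg_gen"
  then have "(\<lambda>f. W (A (W' f))) \<in> alg_gen"
    by (rule normalizing_unitary_alg_gen[OF assms(2)])
  then show "(\<lambda>f. V (W (A (W' (V' f))))) \<in> alg_gen"
    by (rule normalizing_unitary_alg_gen[OF assms(1)])
qed (simp_all add: normalizing_unitaryD[OF assms(1)] normalizing_unitaryD[OF assms(2)])

lemma alg_gen_conjugate:
  assumes left_inverse: "\<And>f. W' (W f) = f"
    and add: "\<And>f g. W (\<lambda>x. f x + g x) = (\<lambda>x. W f x + W g x)"
    and mult: "\<And>f c. W (\<lambda>x. c * f x) = (\<lambda>x. c * W f x)"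
    and Mop_conj: "\<And>l. l \<ge> 0 \<Longrightarrow> (\<lambda>f. W (Mop l (W' f))) \<in> alg_gen"
    and Dop_conj: "\<And>m. m \<ge> 0 \<Longrightarrow> (\<lambda>f. W (Dop m (W' f))) \<in> alg_gen"
    and "A \<in> alg_gen"
  shows "(\<lambda>f. W (A (W' f))) \<in> alg_gen"
  using \<open>A \<in> alg_gen\<close>
proof induction
  case (gen_M l)
  then show ?case by (rule Mop_conj)
next
  case (gen_D m)
  then show ?case by (rule Dop_conj)
next
  case (gen_add A B)
  then show ?case using alg_gen.gen_add[OF gen_add.IH] by (simp add: add)
next
  case (gen_smult A c)
  then show ?case using alg_gen.gen_smult[OF gen_smult.IH, of c] by (simp add: mult)
next
  case (gen_comp A B)
  then show ?case using alg_gen.gen_comp[OF gen_comp.IH] by (simp add: left_inverse)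
qed

lemma bounded_op_conjugate:
  assumes W: "normalizing_unitary W W'" and W': "normalizing_unitary W' W"
    and A: "bounded_op A"
  shows "bounded_op (\<lambda>f. W (A (W' f)))"
proof -
  from A obtain C where C: "\<forall>f\<in>L2. l2norm2 (A f) \<le> C * l2norm2 f"
    unfolding bounded_op_def by blast
  show ?thesis
    unfolding bounded_op_def
  proof (intro conjI ballI allI)
    fix f assume "f \<in> L2"
    then show "W (A (W' f)) \<in> L2"
      using A normalizing_unitary_L2[OF W] normalizing_unitary_L2[OF W'] unfolding bounded_op_def
      by blast
  next
    fix f g assume "f \<in> L2" "g \<in> L2"
    then have "A (\<lambda>x. W' f x + W' g x) =\<^sub>a\<^sub>e (\<lambda>x. A (W' f) x + A (W' g) x)"
      using A normalizing_unitary_L2[OF W'] unfolding bounded_op_def by blast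
    then show "W (A (W' (\<lambda>x. f x + g x))) =\<^sub>a\<^sub>e (\<lambda>x. W (A (W' f)) x + W (A (W' g)) x)"
      by (auto dest: normalizing_unitary_ae_eq[OF W]
          simp: normalizing_unitary_add[OF W] normalizing_unitary_add[OF W'])
  next
    fix f c assume "f \<in> L2"
    then have "A (\<lambda>x. c * W' f x) =\<^sub>a\<^sub>e (\<lambda>x. c * A (W' f) x)"
      using A normalizing_unitary_L2[OF W'] unfolding bounded_op_def by blast
    then show "W (A (W' (\<lambda>x. c * f x))) =\<^sub>a\<^sub>e (\<lambda>x. c * W (A (W' f)) x)"
      by (auto dest: normalizing_unitary_ae_eq[OF W]
          simp: normalizing_unitary_mult[OF W] normalizing_unitary_mult[OF W'])
  next
    show "\<exists>C. \<forall>f\<in>L2. l2norm2 (W (A (W' f))) \<le> C * l2norm2 f"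
      using C normalizing_unitary_L2[OF W']
      by (metis normalizing_unitary_l2norm2[OF W] normalizing_unitary_l2norm2[OF W'])
  qed
qed

definition alg_gen_wot_approx :: "oper \<Rightarrow> bool" where
  "alg_gen_wot_approx T \<longleftrightarrow>
     (\<forall>ps :: (fn \<times> fn) list. (\<forall>(f, g)\<in>set ps. f \<in> L2 \<and> g \<in> L2) \<longrightarrow>
        (\<forall>\<epsilon>>0. \<exists>A\<in>alg_gen. \<forall>(f, g)\<in>set ps. cmod (l2inner (T f) g - l2inner (A f) g) < \<epsilon>))"

lemma Ap_iff: "T \<in> Ap \<longleftrightarrow> bounded_op T \<and> alg_gen_wot_approx T"
  unfolding Ap_def alg_gen_wot_approx_def by blast

lemma alg_gen_wot_approx_conjugate:
  assumes W: "normalizing_unitary W W'" and W': "normalizing_unitary W' W"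
    and T: "alg_gen_wot_approx T"
  shows "alg_gen_wot_approx (\<lambda>f. W (T (W' f)))"
  unfolding alg_gen_wot_approx_def
proof (intro allI impI)
  fix ps :: "(fn \<times> fn) list" and \<epsilon> :: real
  assume ps: "\<forall>(f, g)\<in>set ps. f \<in> L2 \<and> g \<in> L2" and "\<epsilon> > 0"
  have "\<forall>(f, g)\<in>set (map (\<lambda>(f, g). (W' f, W' g)) ps). f \<in> L2 \<and> g \<in> L2"
    using ps normalizing_unitary_L2[OF W'] by auto
  with T \<open>\<epsilon> > 0\<close> obtain A where A: "A \<in> alg_gen" and
    close: "\<forall>(f, g)\<in>set ps. cmod (l2inner (T (W' f)) (W' g) - l2inner (A (W' f)) (W' g)) < \<epsilon>"
    unfolding alg_gen_wot_approx_def by fastforce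
  have W_adjoint: "l2inner (W u) g = l2inner u (W' g)" for u g
    by (metis normalizing_unitary_l2inner[OF W] normalizing_unitary_right_inverse[OF W])
  show "\<exists>B\<in>alg_gen. \<forall>(f, g)\<in>set ps. cmod (l2inner (W (T (W' f))) g - l2inner (B f) g) < \<epsilon>"
  proof (intro bexI[of _ "\<lambda>f. W (A (W' f))"])
    show "\<forall>(f, g)\<in>set ps. cmod (l2inner (W (T (W' f))) g - l2inner (W (A (W' f))) g) < \<epsilon>"
      using close by (simp only: W_adjoint)
  qed (rule normalizing_unitary_alg_gen[OF W A])
qed

lemma Ap_conjugate:
  assumes "normalizing_unitary W W'" and "normalizing_unitary W' W" and "T \<in> Ap"
  shows "(\<lambda>f. W (T (W' f))) \<in> Ap"
  using assms bounded_op_conjugate alg_gen_wot_approx_conjugate by (auto simp: Ap_iff)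

lemma restr_unit_equiv_if_normalizing_unitary:
  assumes W: "normalizing_unitary W W'" and W': "normalizing_unitary W' W"
    and "W ` K1 \<subseteq> K2" and "W' ` K2 \<subseteq> K1"
  shows "restr_unit_equiv K1 K2"
  unfolding restr_unit_equiv_def
proof (intro exI[of _ W] conjI ballI allI)
  show "\<And>f. f \<in> K1 \<Longrightarrow> W f \<in> K2"
    using assms(3) by blast
  show "\<And>f g. W (\<lambda>x. f x + g x) =\<^sub>a\<^sub>e (\<lambda>x. W f x + W g x)"
    "\<And>f c. W (\<lambda>x. c * f x) =\<^sub>a\<^sub>e (\<lambda>x. c * W f x)"
    "\<And>f g. l2inner (W f) (W g) = l2inner f g"
    by (simp_all add: ae_eq_refl normalizing_unitaryD[OF W])
  show "\<And>g. g \<in> K2 \<Longrightarrow> \<exists>f\<in>K1. W f =\<^sub>a\<^sub>e g"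
    using assms(4) normalizing_unitary_right_inverse[OF W] ae_eq_refl by (metis image_subset_iff)
  show "\<exists>B\<in>Ap. \<forall>f\<in>K1. W (T f) =\<^sub>a\<^sub>e B (W f)" if "T \<in> Ap" for T
    using Ap_conjugate[OF W W' that] normalizing_unitary_right_inverse[OF W'] ae_eq_refl by metis
  show "\<exists>A\<in>Ap. \<forall>f\<in>K1. W (A f) =\<^sub>a\<^sub>e T (W f)" if "T \<in> Ap" for T
    using Ap_conjugate[OF W' W that] normalizing_unitary_right_inverse[OF W] ae_eq_refl by metis
qed

lemma Mop_conj_Mop: "Mop k (Mop l (Mop (- k) f)) = Mop l f"
  by (simp add: Mop_Mop add.commute)

lemma Mop_conj_Dop: "Mop k (Dop m (Mop (- k) f)) = (\<lambda>x. exp (\<i> * complex_of_real (k * m)) * Dop m f x)"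
  unfolding Mop_def Dop_def by (auto simp: exp_add[symmetric] algebra_simps)

lemma Dop_conj_Mop: "Dop t (Mop l (Dop (- t) f)) = (\<lambda>x. exp (\<i> * complex_of_real (- (l * t))) * Mop l f x)"
  unfolding Mop_def Dop_def by (auto simp: exp_add[symmetric] algebra_simps)

lemma Dop_conj_Dop: "Dop t (Dop m (Dop (- t) f)) = Dop m f"
  unfolding Dop_def by (simp add: algebra_simps)

lemma dil_conj_Mop: "a > 0 \<Longrightarrow> dil a (Mop l (dil (1 / a) f)) = Mop (a * l) f"
  unfolding Mop_def dil_def by (auto simp: real_sqrt_divide algebra_simps simp flip: of_real_mult)

lemma dil_conj_Dop: "a > 0 \<Longrightarrow> dil a (Dop m (dil (1 / a) f)) = Dop (m / a) f"
  unfolding Dop_def dil_def by (auto simp: real_sqrt_divide field_simps simp flip: of_real_mult)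

lemma normalizing_unitary_Mop: "normalizing_unitary (Mop k) (Mop (- k))"
  unfolding normalizing_unitary_def
proof (intro conjI allI ballI impI)
  fix f g :: fn
  have "Mop k f x * cnj (Mop k g x) = f x * cnj (g x)" for x
    unfolding Mop_def by (simp add: exp_cnj exp_minus field_simps)
  then show "l2inner (Mop k f) (Mop k g) = l2inner f g"
    unfolding l2inner_def by simp
next
  fix A assume "A \<in> alg_gen"
  then show "(\<lambda>f. Mop k (A (Mop (- k) f))) \<in> alg_gen"
  proof (rule alg_gen_conjugate[rotated 5])
    show "(\<lambda>f. Mop k (Mop l (Mop (- k) f))) \<in> alg_gen" if "l \<ge> 0" for l
      using alg_gen.gen_M[OF that] by (simp add: Mop_conj_Mop)
    show "(\<lambda>f. Mop k (Dop m (Mop (- k) f))) \<in> alg_gen" if "m \<ge> 0" for m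
      using alg_gen.gen_smult[OF alg_gen.gen_D[OF that]] by (simp add: Mop_conj_Dop)
  qed (simp_all add: Mop_Mop, simp_all add: Mop_def algebra_simps)
next
  fix f g :: fn assume "f =\<^sub>a\<^sub>e g"
  then show "Mop k f =\<^sub>a\<^sub>e Mop k g"
    unfolding ae_eq_def Mop_def by auto
qed (simp_all add: Mop_L2 Mop_Mop, simp_all add: Mop_def algebra_simps)

lemma normalizing_unitary_Dop: "normalizing_unitary (Dop t) (Dop (- t))"
  unfolding normalizing_unitary_def
proof (intro conjI allI ballI impI)
  fix f g :: fn
  show "l2inner (Dop t f) (Dop t g) = l2inner f g"
    unfolding l2inner_def Dop_def using lborel_integral_shift[of "\<lambda>x. f x * cnj (g x)" t] by simp
next
  fix A assume "A \<in> alg_gen"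
  then show "(\<lambda>f. Dop t (A (Dop (- t) f))) \<in> alg_gen"
  proof (rule alg_gen_conjugate[rotated 5])
    show "(\<lambda>f. Dop t (Mop l (Dop (- t) f))) \<in> alg_gen" if "l \<ge> 0" for l
      using alg_gen.gen_smult[OF alg_gen.gen_M[OF that]] by (simp add: Dop_conj_Mop)
    show "(\<lambda>f. Dop t (Dop m (Dop (- t) f))) \<in> alg_gen" if "m \<ge> 0" for m
      using alg_gen.gen_D[OF that] by (simp add: Dop_conj_Dop)
  qed (simp_all add: Dop_def)
next
  fix f g :: fn assume "f =\<^sub>a\<^sub>e g"
  then show "Dop t f =\<^sub>a\<^sub>e Dop t g"
    unfolding ae_eq_def Dop_def using AE_lborel_affine[of 1 "\<lambda>x. f x = g x" "- t"] by simp
qed (simp_all add: Dop_L2, simp_all add: Dop_def)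

lemma normalizing_unitary_dil:
  assumes a: "a > 0"
  shows "normalizing_unitary (dil a) (dil (1 / a))"
  unfolding normalizing_unitary_def
proof (intro conjI allI ballI impI)
  fix f g :: fn
  have "dil a f x * cnj (dil a g x) = a *\<^sub>R (f (a * x) * cnj (g (a * x)))" for x
    unfolding dil_def using a by (simp add: scaleR_conv_of_real algebra_simps flip: of_real_mult)
  then show "l2inner (dil a f) (dil a g) = l2inner f g"
    unfolding l2inner_def using lborel_integral_dilation[OF a, of "\<lambda>x. f x * cnj (g x)"] by simp
next
  fix A assume "A \<in> alg_gen"
  then show "(\<lambda>f. dil a (A (dil (1 / a) f))) \<in> alg_gen"
  proof (rule alg_gen_conjugate[rotated 5])
    show "(\<lambda>f. dil a (Mop l (dil (1 / a) f))) \<in> alg_gen" if "l \<ge> 0" for l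
      using alg_gen.gen_M[of "a * l"] that a by (simp add: dil_conj_Mop)
    show "(\<lambda>f. dil a (Dop m (dil (1 / a) f))) \<in> alg_gen" if "m \<ge> 0" for m
      using alg_gen.gen_D[of "m / a"] that a by (simp add: dil_conj_Dop)
  qed (use a in \<open>simp_all add: dil_dil, simp_all add: dil_def algebra_simps\<close>)
next
  fix f g :: fn assume "f =\<^sub>a\<^sub>e g"
  then show "dil a f =\<^sub>a\<^sub>e dil a g"
    unfolding ae_eq_def dil_def using AE_lborel_affine[of a "\<lambda>x. f x = g x" 0] a by simp
qed (use a in \<open>simp_all add: dil_L2 dil_dil, simp_all add: dil_def algebra_simps\<close>)

lemma filterlim_scale_at_right_0:
  assumes "(a::real) > 0"
  shows "filterlim (\<lambda>y. a * y) (at_right 0) (at_right 0)"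
  unfolding filterlim_at
proof
  show "\<forall>\<^sub>F y in at_right 0. a * y \<in> {0<..} \<and> a * y \<noteq> 0"
    using eventually_at_right_less[of "0::real"] by (rule eventually_mono) (use assms in auto)
  show "((\<lambda>y. a * y) \<longlongrightarrow> 0) (at_right 0)"
    using tendsto_mult_left[OF tendsto_ident_at, of a 0 "{0<..}"] by simp
qed

lemma H2_dil:
  assumes a: "a > 0" and "h \<in> H2"
  shows "dil a h \<in> H2"
proof -
  from \<open>h \<in> H2\<close> obtain F C where "h \<in> L2" and F_hol: "F holomorphic_on {z. Im z > 0}"
    and F_int: "\<forall>y>0. integrable lborel (\<lambda>x. (cmod (F (Complex x y)))\<^sup>2)"
    and F_bound: "\<forall>y>0. integral\<^sup>L lborel (\<lambda>x. (cmod (F (Complex x y)))\<^sup>2) \<le> C"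
    and F_lim: "((\<lambda>y. integral\<^sup>L lborel (\<lambda>x. (cmod (F (Complex x y) - h x))\<^sup>2)) \<longlongrightarrow> 0) (at_right 0)"
    unfolding H2_def by blast
  define G where "G z = complex_of_real (sqrt a) * F (complex_of_real a * z)" for z
  have G_dil: "G (Complex x y) = dil a (\<lambda>x. F (Complex x (a * y))) x" for x y
  proof -
    have "complex_of_real a * Complex x y = Complex (a * x) (a * y)"
      by (simp add: complex_eq_iff)
    then show ?thesis
      by (simp add: G_def dil_def)
  qed
  have G_dil_diff: "G (Complex x y) - dil a h x = dil a (\<lambda>x. F (Complex x (a * y)) - h x) x" for x y
    by (simp add: G_dil dil_def algebra_simps)
  have "G holomorphic_on {z. Im z > 0}"
    unfolding G_def using a
    by (intro holomorphic_intros holomorphic_on_compose_gen[OF _ F_hol, unfolded o_def]) auto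
  moreover have "\<forall>y>0. integrable lborel (\<lambda>x. (cmod (G (Complex x y)))\<^sup>2)"
    using F_int a by (simp add: G_dil integrable_norm_dil_sq_iff)
  moreover have "\<forall>y>0. integral\<^sup>L lborel (\<lambda>x. (cmod (G (Complex x y)))\<^sup>2) \<le> C"
    using F_bound a by (simp add: G_dil integral_norm_dil_sq)
  moreover have "((\<lambda>y. integral\<^sup>L lborel (\<lambda>x. (cmod (G (Complex x y) - dil a h x))\<^sup>2)) \<longlongrightarrow> 0) (at_right 0)"
    using filterlim_compose[OF F_lim filterlim_scale_at_right_0[OF a]] a
    by (simp add: G_dil_diff integral_norm_dil_sq)
  ultimately show ?thesis
    using dil_L2[OF a \<open>h \<in> L2\<close>] unfolding H2_def by blast
qed

lemma Lhalf_Dop: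
  assumes "f \<in> Lhalf t"
  shows "Dop d f \<in> Lhalf (t + d)"
proof -
  from assms have "f \<in> L2" and "AE x in lborel. x < t \<longrightarrow> f x = 0"
    unfolding Lhalf_def by auto
  then have "AE x in lborel. - d + 1 * x < t \<longrightarrow> f (- d + 1 * x) = 0"
    by (intro AE_lborel_affine) simp_all
  then have "AE x in lborel. x < t + d \<longrightarrow> Dop d f x = 0"
    by (rule eventually_mono) (auto simp: Dop_def)
  then show ?thesis
    using Dop_L2[OF \<open>f \<in> L2\<close>] unfolding Lhalf_def by blast
qed

lemma MH2_Mop:
  assumes "f \<in> MH2 l"
  shows "Mop k f \<in> MH2 (k + l)"
proof -
  from assms obtain h where "f \<in> L2" "h \<in> H2" and f_eq: "f =\<^sub>a\<^sub>e Mop l h"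
    unfolding MH2_def by blast
  from f_eq have "Mop k f =\<^sub>a\<^sub>e Mop k (Mop l h)"
    by (rule normalizing_unitary_ae_eq[OF normalizing_unitary_Mop])
  then have "Mop k f =\<^sub>a\<^sub>e Mop (k + l) h"
    by (simp only: Mop_Mop)
  then show ?thesis
    using Mop_L2[OF \<open>f \<in> L2\<close>] \<open>h \<in> H2\<close> unfolding MH2_def by blast
qed

lemma Kls_Mop:
  assumes "f \<in> Kls l s"
  shows "Mop k f \<in> Kls (k + l) s"
proof -
  from assms obtain h where "f \<in> L2" "h \<in> H2" and f_eq: "f =\<^sub>a\<^sub>e Mop l (\<lambda>x. phi s x * h x)"
    unfolding Kls_def by blast
  from f_eq have "Mop k f =\<^sub>a\<^sub>e Mop k (Mop l (\<lambda>x. phi s x * h x))"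
    by (rule normalizing_unitary_ae_eq[OF normalizing_unitary_Mop])
  then have "Mop k f =\<^sub>a\<^sub>e Mop (k + l) (\<lambda>x. phi s x * h x)"
    by (simp only: Mop_Mop)
  then show ?thesis
    using Mop_L2[OF \<open>f \<in> L2\<close>] \<open>h \<in> H2\<close> unfolding Kls_def by blast
qed

lemma Kls_dil:
  assumes a: "a > 0" and "f \<in> Kls l s"
  shows "dil a f \<in> Kls (l * a) (s * a\<^sup>2)"
proof -
  from assms(2) obtain h where "f \<in> L2" "h \<in> H2" and f_eq: "f =\<^sub>a\<^sub>e Mop l (\<lambda>x. phi s x * h x)"
    unfolding Kls_def by blast
  from f_eq have "dil a f =\<^sub>a\<^sub>e dil a (Mop l (\<lambda>x. phi s x * h x))"
    by (rule normalizing_unitary_ae_eq[OF normalizing_unitary_dil[OF a]])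
  then have "dil a f =\<^sub>a\<^sub>e Mop (l * a) (\<lambda>x. phi (s * a\<^sup>2) x * dil a h x)"
    by (simp only: dil_Mop dil_mult_phi)
  then show ?thesis
    using dil_L2[OF a \<open>f \<in> L2\<close>] H2_dil[OF a \<open>h \<in> H2\<close>] unfolding Kls_def by blast
qed

lemma restr_unit_equiv_Lhalf: "restr_unit_equiv (Lhalf t1) (Lhalf t2)"
proof (rule restr_unit_equiv_if_normalizing_unitary)
  show "normalizing_unitary (Dop (t2 - t1)) (Dop (t1 - t2))"
    "normalizing_unitary (Dop (t1 - t2)) (Dop (t2 - t1))"
    using normalizing_unitary_Dop[of "t2 - t1"] normalizing_unitary_Dop[of "t1 - t2"] by simp_all
  show "Dop (t2 - t1) ` Lhalf t1 \<subseteq> Lhalf t2" "Dop (t1 - t2) ` Lhalf t2 \<subseteq> Lhalf t1"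
    using Lhalf_Dop[of _ t1 "t2 - t1"] Lhalf_Dop[of _ t2 "t1 - t2"] by auto
qed

lemma restr_unit_equiv_MH2: "restr_unit_equiv (MH2 l1) (MH2 l2)"
proof (rule restr_unit_equiv_if_normalizing_unitary)
  show "normalizing_unitary (Mop (l2 - l1)) (Mop (l1 - l2))"
    "normalizing_unitary (Mop (l1 - l2)) (Mop (l2 - l1))"
    using normalizing_unitary_Mop[of "l2 - l1"] normalizing_unitary_Mop[of "l1 - l2"] by simp_all
  show "Mop (l2 - l1) ` MH2 l1 \<subseteq> MH2 l2" "Mop (l1 - l2) ` MH2 l2 \<subseteq> MH2 l1"
    using MH2_Mop[of _ l1 "l2 - l1"] MH2_Mop[of _ l2 "l1 - l2"] by auto
qed

lemma restr_unit_equiv_Kls: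
  assumes "s1 > 0" and "s2 > 0"
  shows "restr_unit_equiv (Kls l1 s1) (Kls l2 s2)"
proof -
  define a where "a = sqrt (s2 / s1)"
  define k where "k = l2 - l1 * a"
  have a: "a > 0" and s1: "s1 * a\<^sup>2 = s2" and s2: "s2 * (1 / a)\<^sup>2 = s1"
    using assms by (simp_all add: a_def power_divide)
  have l1: "(- k + l2) * (1 / a) = l1" and l2: "k + l1 * a = l2"
    using a by (simp_all add: k_def)
  show ?thesis
  proof (rule restr_unit_equiv_if_normalizing_unitary)
    show "normalizing_unitary (\<lambda>f. Mop k (dil a f)) (\<lambda>f. dil (1 / a) (Mop (- k) f))"
      by (rule normalizing_unitary_comp[OF normalizing_unitary_Mop normalizing_unitary_dil[OF a]])
    show "normalizing_unitary (\<lambda>f. dil (1 / a) (Mop (- k) f)) (\<lambda>f. Mop k (dil a f))"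
      using normalizing_unitary_comp[OF normalizing_unitary_dil normalizing_unitary_Mop, of "1 / a" "- k"] a
      by simp
    show "(\<lambda>f. Mop k (dil a f)) ` Kls l1 s1 \<subseteq> Kls l2 s2"
    proof (rule image_subsetI)
      fix f assume "f \<in> Kls l1 s1"
      then have "Mop k (dil a f) \<in> Kls (k + l1 * a) (s1 * a\<^sup>2)"
        by (intro Kls_Mop Kls_dil a)
      then show "Mop k (dil a f) \<in> Kls l2 s2"
        by (simp only: s1 l2)
    qed
    show "(\<lambda>f. dil (1 / a) (Mop (- k) f)) ` Kls l2 s2 \<subseteq> Kls l1 s1"
    proof (rule image_subsetI)
      fix g assume "g \<in> Kls l2 s2"
      then have "dil (1 / a) (Mop (- k) g) \<in> Kls ((- k + l2) * (1 / a)) (s2 * (1 / a)\<^sup>2)"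
        using a by (intro Kls_dil Kls_Mop) simp_all
      then show "dil (1 / a) (Mop (- k) g) \<in> Kls l1 s1"
        by (simp only: s2 l1)
    qed
  qed
qed

theorem lemma5p1:
  fixes K1 K2 :: "fn set"
  assumes "proper_subspace K1" and "proper_subspace K2"
    and "(\<exists>t1 t2. K1 = Lhalf t1 \<and> K2 = Lhalf t2) \<or>
         (\<exists>l1 l2. K1 = MH2 l1 \<and> K2 = MH2 l2) \<or>
         (\<exists>l1 s1 l2 s2. s1 > 0 \<and> s2 > 0 \<and> K1 = Kls l1 s1 \<and> K2 = Kls l2 s2)"
  shows "restr_unit_equiv K1 K2"
  using assms(3)
  by (elim disjE exE conjE) (simp_all add: restr_unit_equiv_Lhalf restr_unit_equiv_MH2 restr_unit_equiv_Kls)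

end
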